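(* Let $S$ be a finite alphabet and $X \subset S^{\mathbb{Z}}$ a subshift. For all words $u, v \in S^*$, if $C_X(u) = C_X(v)$, then $C_{X^{(1)}}(u) = C_{X^{(1)}}(v)$.
   Context: A subshift $X \subset S^{\mathbb{Z}}$ is a closed, shift-invariant subset of $S^{\mathbb{Z}}$ (product topology, $S$ discrete). A word $w$ occurs in $X$, written $w \sqsubset X$, if it appears as a contiguous subword of some configuration of $X$. The context of a word $v \in S^*$ in $X$ is $C_X(v) = \{(w,w') \in (S^* )^2 \mid wvw' \sqsubset X\}$. The Cantor–Bendixson derivative $X^{(1)} = X'$ is the set of non-isolated points of $X$, i.e. $X' = \{x \in X \mid x \in \overline{X \setminus \{x\}}\}$; it is again a subshift. *)

theory Defs
  imports "HOL-Analysis.Analysis"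
begin

definition fullshift_top :: "'s set \<Rightarrow> (int \<Rightarrow> 's) topology" where
  "fullshift_top S = product_topology (\<lambda>_. discrete_topology S) UNIV"

definition shift :: "(int \<Rightarrow> 's) \<Rightarrow> (int \<Rightarrow> 's)" where
  "shift x = (\<lambda>i. x (i + 1))"

definition subshift :: "'s set \<Rightarrow> (int \<Rightarrow> 's) set \<Rightarrow> bool" where
  "subshift S X \<longleftrightarrow> X \<subseteq> topspace (fullshift_top S) \<and>
     closedin (fullshift_top S) X \<and> shift ` X = X"

definition occurs :: "'s list \<Rightarrow> (int \<Rightarrow> 's) set \<Rightarrow> bool" where
  "occurs w X \<longleftrightarrow> (\<exists>x\<in>X. \<exists>i::int. \<forall>k<length w. x (i + int k) = w ! k)"

definition ctx_of :: "'s set \<Rightarrow> (int \<Rightarrow> 's) set \<Rightarrow> 's list \<Rightarrow> ('s list \<times> 's list) set" where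
  "ctx_of S X v = {(w, w'). set w \<subseteq> S \<and> set w' \<subseteq> S \<and> occurs (w @ v @ w') X}"

definition CB_deriv :: "'s set \<Rightarrow> (int \<Rightarrow> 's) set \<Rightarrow> (int \<Rightarrow> 's) set" where
  "CB_deriv S X = {x \<in> X. x \<in> fullshift_top S closure_of (X - {x})}"

end

theory Submission
  imports Defs
begin

(* Let x be a non-isolated point of X containing w u w' with u at
   position p, and let y be obtained from x by replacing this occurrence of u by v
   (the tail of x is shifted accordingly; we call y a splice of x).
   (1) y lies in X: every finite window a v b of y around the spliced position comes
       from a window a u b of x, and (a,b) is a context of u, hence of v; so a v b
       occurs in X, and by shift invariance at the right position.  Since X is closed,
       y is in X.
   (2) y is non-isolated: points x' of X different from x but agreeing with x on a
       large window also contain u at p; their splices lie in X by (1), differ from y,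
       and agree with y on a large window.
   Hence w v w' occurs in X', which shows C_X'(u) <= C_X'(v) whenever
   C_X(u) <= C_X(v); the theorem follows by symmetry. *)

section \<open>Closure in the full shift\<close>

lemma topspace_fullshift: "topspace (fullshift_top S) = {x. \<forall>i. x i \<in> S}"
  unfolding fullshift_top_def by (auto simp: PiE_iff)

definition cylinder :: "'s set \<Rightarrow> (int \<Rightarrow> 's) \<Rightarrow> nat \<Rightarrow> (int \<Rightarrow> 's) set" where
  "cylinder S y n = {z \<in> topspace (fullshift_top S). \<forall>j\<in>{-int n..int n}. z j = y j}"

text \<open>Cylinders are open: they constrain only the finitely many coordinates of the
  window.\<close>
lemma openin_cylinder:
  assumes "y \<in> topspace (fullshift_top S)"
  shows "openin (fullshift_top S) (cylinder S y n)"
  unfolding fullshift_top_def openin_product_topology_alt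
proof (intro ballI)
  fix z assume z: "z \<in> cylinder S y n"
  define U where "U = (\<lambda>i. if i \<in> {-int n..int n} then {y i} else S)"
  have "finite {i \<in> UNIV. U i \<noteq> topspace (discrete_topology S)}"
    by (rule finite_subset[of _ "{-int n..int n}"]) (auto simp: U_def)
  moreover have "\<forall>i\<in>UNIV. openin (discrete_topology S) (U i)"
    using assms by (simp add: U_def topspace_fullshift)
  moreover have "z \<in> Pi\<^sub>E UNIV U"
    using z by (simp add: U_def PiE_iff cylinder_def topspace_fullshift)
  moreover have "Pi\<^sub>E UNIV U \<subseteq> cylinder S y n"
  proof
    fix z' assume "z' \<in> Pi\<^sub>E UNIV U"
    then have z': "z' i \<in> U i" for i by (simp add: PiE_iff)
    have "z' i \<in> S" for i
      using z'[of i] assms by (auto simp: U_def topspace_fullshift split: if_splits)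
    moreover have "z' j = y j" if "j \<in> {-int n..int n}" for j
      using z'[of j] that by (simp add: U_def)
    ultimately show "z' \<in> cylinder S y n" by (simp add: cylinder_def topspace_fullshift)
  qed
  ultimately show "\<exists>U. finite {i \<in> UNIV. U i \<noteq> topspace (discrete_topology S)} \<and>
      (\<forall>i\<in>UNIV. openin (discrete_topology S) (U i)) \<and> z \<in> Pi\<^sub>E UNIV U \<and>
      Pi\<^sub>E UNIV U \<subseteq> cylinder S y n"
    by (intro exI[of _ U] conjI)
qed

text \<open>An open set only constrains finitely many coordinates, so it contains a
  central cylinder around each of its points.\<close>
lemma cylinder_subset_open:
  assumes "openin (fullshift_top S) U" "y \<in> U"
  obtains n where "cylinder S y n \<subseteq> U"
proof -
  obtain V where V: "finite {i. V i \<noteq> S}" "y \<in> Pi\<^sub>E UNIV V" "Pi\<^sub>E UNIV V \<subseteq> U"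
    using assms unfolding fullshift_top_def openin_product_topology_alt by force
  obtain N where N: "abs ` {i. V i \<noteq> S} \<subseteq> {..N}"
    using V(1) finite_int_iff_bounded_le by blast
  define n where "n = nat N"
  have n: "{i. V i \<noteq> S} \<subseteq> {-int n..int n}" using N by (force simp: n_def)
  have "cylinder S y n \<subseteq> Pi\<^sub>E UNIV V"
  proof
    fix z assume z: "z \<in> cylinder S y n"
    have "z i \<in> V i" for i
    proof (cases "V i = S")
      case True
      with z show ?thesis by (simp add: cylinder_def topspace_fullshift)
    next
      case False
      with n have "z i = y i" using z unfolding cylinder_def by blast
      with V(2) show ?thesis by (simp add: PiE_iff)
    qed
    then show "z \<in> Pi\<^sub>E UNIV V" by (simp add: PiE_iff)
  qed
  with V(3) show ?thesis by (intro that) blast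
qed

lemma closure_of_fullshift_iff:
  assumes "T \<subseteq> topspace (fullshift_top S)"
  shows "y \<in> fullshift_top S closure_of T \<longleftrightarrow>
    y \<in> topspace (fullshift_top S) \<and> (\<forall>n. \<exists>z\<in>T. \<forall>j\<in>{-int n..int n}. z j = y j)"
proof
  assume y: "y \<in> fullshift_top S closure_of T"
  then have yT: "y \<in> topspace (fullshift_top S)" by (simp add: in_closure_of)
  have "\<exists>z\<in>T. \<forall>j\<in>{-int n..int n}. z j = y j" for n
  proof -
    have "openin (fullshift_top S) (cylinder S y n)" using yT by (rule openin_cylinder)
    moreover have "y \<in> cylinder S y n" using yT by (simp add: cylinder_def)
    ultimately obtain z where "z \<in> T" "z \<in> cylinder S y n" using y unfolding in_closure_of by blast
    then show ?thesis unfolding cylinder_def by blast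
  qed
  with yT show "y \<in> topspace (fullshift_top S) \<and> (\<forall>n. \<exists>z\<in>T. \<forall>j\<in>{-int n..int n}. z j = y j)"
    by blast
next
  assume "y \<in> topspace (fullshift_top S) \<and> (\<forall>n. \<exists>z\<in>T. \<forall>j\<in>{-int n..int n}. z j = y j)"
  then have y: "y \<in> topspace (fullshift_top S)"
    and approx: "\<forall>n. \<exists>z\<in>T. \<forall>j\<in>{-int n..int n}. z j = y j" by blast+
  show "y \<in> fullshift_top S closure_of T" unfolding in_closure_of
  proof (intro conjI y allI impI)
    fix U assume "y \<in> U \<and> openin (fullshift_top S) U"
    then obtain n where n: "cylinder S y n \<subseteq> U" using cylinder_subset_open by metis
    obtain z where "z \<in> T" "\<forall>j\<in>{-int n..int n}. z j = y j" using approx by blast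
    with assms n show "\<exists>z. z \<in> T \<and> z \<in> U" unfolding cylinder_def by blast
  qed
qed

lemma subshift_topspace: "subshift S X \<Longrightarrow> x \<in> X \<Longrightarrow> x \<in> topspace (fullshift_top S)"
  unfolding subshift_def by blast

lemma CB_deriv_iff:
  assumes "subshift S X"
  shows "x \<in> CB_deriv S X \<longleftrightarrow>
    x \<in> X \<and> (\<forall>n. \<exists>x'\<in>X - {x}. \<forall>j\<in>{-int n..int n}. x' j = x j)"
proof -
  have "X \<subseteq> topspace (fullshift_top S)" using subshift_topspace[OF assms] by blast
  then show ?thesis
    unfolding CB_deriv_def using closure_of_fullshift_iff[of "X - {x}" S x] by blast
qed

section \<open>Words read off configurations\<close>

definition factor :: "(int \<Rightarrow> 's) \<Rightarrow> int \<Rightarrow> nat \<Rightarrow> 's list" where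
  "factor x q m = map (\<lambda>k. x (q + int k)) [0..<m]"

definition occurs_at :: "(int \<Rightarrow> 's) \<Rightarrow> int \<Rightarrow> 's list \<Rightarrow> bool" where
  "occurs_at x q w \<longleftrightarrow> factor x q (length w) = w"

lemma length_factor [simp]: "length (factor x q m) = m"
  by (simp add: factor_def)

lemma factor_add: "factor x q (m + n) = factor x q m @ factor x (q + int m) n"
  by (induction n) (simp_all add: factor_def algebra_simps)

lemma set_factor:
  assumes "x \<in> topspace (fullshift_top S)"
  shows "set (factor x q m) \<subseteq> S"
  using assms by (auto simp: factor_def topspace_fullshift)

lemma factor_eq_iff: "factor x q m = factor y q m \<longleftrightarrow> (\<forall>j\<in>{q..<q + int m}. x j = y j)"
proof -
  have "(\<forall>k<m. x (q + int k) = y (q + int k)) \<longleftrightarrow> (\<forall>j\<in>{q..<q + int m}. x j = y j)"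
  proof safe
    fix j assume "\<forall>k<m. x (q + int k) = y (q + int k)" "j \<in> {q..<q + int m}"
    then show "x j = y j" by (auto dest: spec[of _ "nat (j - q)"])
  qed auto
  then show ?thesis unfolding factor_def list_eq_iff_nth_eq by simp
qed

lemma occurs_at_iff_nth: "occurs_at x q w \<longleftrightarrow> (\<forall>k<length w. x (q + int k) = w ! k)"
  unfolding occurs_at_def factor_def list_eq_iff_nth_eq by auto

lemma occurs_iff_occurs_at: "occurs w X \<longleftrightarrow> (\<exists>x\<in>X. \<exists>q. occurs_at x q w)"
  unfolding occurs_def occurs_at_iff_nth by blast

lemma occurs_at_append:
  "occurs_at x q (w1 @ w2) \<longleftrightarrow> occurs_at x q w1 \<and> occurs_at x (q + int (length w1)) w2"
  by (auto simp: occurs_at_def factor_add append_eq_append_conv)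

lemma factor_window:
  "factor x (p - int m) (m + L + m) = factor x (p - int m) m @ factor x p L @ factor x (p + int L) m"
  by (simp only: factor_add append_assoc) (simp add: algebra_simps)

lemma factor_window_eq_iff:
  "factor x (p - int m) (m + L + m) = factor y (p - int m) (m + L + m) \<longleftrightarrow>
    (\<forall>j\<in>{p - int m..<p + int L + int m}. x j = y j)"
  by (simp add: factor_eq_iff algebra_simps)

lemma central_window_within:
  obtains m where "{-int n..int n} \<subseteq> {p - int m..<p + int L + int m}"
  by (rule that[of "n + nat \<bar>p\<bar> + 1"]) auto

lemma window_within_central:
  obtains n where "{p - int m..<p + int L + int m} \<subseteq> {-int n..int n}"
  by (rule that[of "nat \<bar>p\<bar> + m + L"]) auto

definition translate :: "int \<Rightarrow> (int \<Rightarrow> 's) \<Rightarrow> (int \<Rightarrow> 's)" where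
  "translate d x = (\<lambda>j. x (j + d))"

lemma factor_translate: "factor (translate d x) q m = factor x (q + d) m"
  by (simp add: factor_def translate_def algebra_simps)

text \<open>Shift invariance in both directions gives invariance under all translations.\<close>
lemma subshift_translate:
  assumes "subshift S X" "x \<in> X"
  shows "translate d x \<in> X"
proof (induction d rule: int_induct[where k = 0])
  case base
  show ?case using assms(2) by (simp add: translate_def)
next
  case (step1 d)
  have "translate (d + 1) x = shift (translate d x)"
    by (simp add: translate_def shift_def algebra_simps)
  then show ?case using step1 assms(1) unfolding subshift_def by blast
next
  case (step2 d)
  then obtain x' where x': "x' \<in> X" "translate d x = shift x'"
    using assms(1) unfolding subshift_def by blast
  have "translate (d - 1) x = x'"
  proof
    fix j
    show "translate (d - 1) x j = x' j"
      using fun_cong[OF x'(2), of "j - 1"] by (simp add: translate_def shift_def algebra_simps)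
  qed
  with x' show ?case by simp
qed

lemma occurs_at_any_position:
  assumes "subshift S X" "occurs w X"
  obtains x where "x \<in> X" "occurs_at x q w"
proof -
  obtain x q' where "x \<in> X" "occurs_at x q' w"
    using assms(2) by (auto simp: occurs_iff_occurs_at)
  then show ?thesis
    using subshift_translate[OF assms(1), of x "q' - q"]
    by (intro that[of "translate (q' - q) x"]) (simp_all add: occurs_at_def factor_translate)
qed

section \<open>Splicing a word into a configuration\<close>

definition splice :: "(int \<Rightarrow> 's) \<Rightarrow> int \<Rightarrow> nat \<Rightarrow> 's list \<Rightarrow> (int \<Rightarrow> 's)" where
  "splice x p l v = (\<lambda>j. if j < p then x j
     else if j < p + int (length v) then v ! nat (j - p)
     else x (j - int (length v) + int l))"

lemma splice_in_topspace:
  assumes "x \<in> topspace (fullshift_top S)" "set v \<subseteq> S"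
  shows "splice x p l v \<in> topspace (fullshift_top S)"
  using assms by (auto simp: topspace_fullshift splice_def intro!: nth_mem[THEN subsetD[OF assms(2)]])

lemma factor_splice_left: "q + int m \<le> p \<Longrightarrow> factor (splice x p l v) q m = factor x q m"
  by (simp add: factor_def splice_def)

lemma factor_splice_middle: "factor (splice x p l v) p (length v) = v"
  unfolding factor_def list_eq_iff_nth_eq by (simp add: splice_def)

lemma factor_splice_right:
  "factor (splice x p l v) (p + int (length v)) m = factor x (p + int l) m"
  by (simp add: factor_def splice_def algebra_simps)

lemma factor_splice_window:
  "factor (splice x p l v) (p - int m) (m + length v + m) =
    factor x (p - int m) m @ v @ factor x (p + int l) m"
  by (simp add: factor_window factor_splice_left factor_splice_middle factor_splice_right)

lemma factor_splice_window_eq: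
  assumes "factor x (p - int m) (m + l + m) = factor x' (p - int m) (m + l + m)"
  shows "factor (splice x p l v) (p - int m) (m + length v + m) =
    factor (splice x' p l v) (p - int m) (m + length v + m)"
proof -
  have "factor x (p - int m) m = factor x' (p - int m) m"
    and "factor x (p + int l) m = factor x' (p + int l) m"
    using assms unfolding factor_window by simp_all
  then show ?thesis unfolding factor_splice_window by simp
qed

lemma splice_inj:
  assumes "factor x p l = factor x' p l" "splice x p l v = splice x' p l v"
  shows "x = x'"
proof
  fix j
  consider "j < p" | "p \<le> j" "j < p + int l" | "p + int l \<le> j" by linarith
  then show "x j = x' j"
  proof cases
    case 1
    then show ?thesis using fun_cong[OF assms(2), of j] by (simp add: splice_def)
  next
    case 2
    then show ?thesis using assms(1) by (simp add: factor_eq_iff)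
  next
    case 3
    then show ?thesis using fun_cong[OF assms(2), of "j - int l + int (length v)"]
      by (simp add: splice_def)
  qed
qed

section \<open>Inclusion of contexts allows splicing\<close>

context
  fixes S :: "'s set" and X :: "(int \<Rightarrow> 's) set" and u v :: "'s list"
  assumes sub: "subshift S X"
    and ctx: "ctx_of S X u \<subseteq> ctx_of S X v"
begin

text \<open>Local replacement: every window of the splice of a point of X (replacing an
  occurrence of u by v) is a window of some point of X.  The window a u b of x gives
  the context (a, b) of u, hence of v.\<close>
lemma splice_window_in_subshift:
  assumes "x \<in> X" "occurs_at x p u"
  obtains z where "z \<in> X"
    "factor z (p - int m) (m + length v + m) =
       factor (splice x p (length u) v) (p - int m) (m + length v + m)"
proof -
  define a where "a = factor x (p - int m) m"
  define b where "b = factor x (p + int (length u)) m"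
  have "occurs_at x (p - int m) (a @ u @ b)"
    using assms(2) factor_window[of x p m "length u"]
    by (simp add: occurs_at_def a_def b_def add.assoc)
  then have "occurs (a @ u @ b) X" using assms(1) by (auto simp: occurs_iff_occurs_at)
  moreover have "set a \<subseteq> S" "set b \<subseteq> S"
    unfolding a_def b_def using set_factor subshift_topspace[OF sub assms(1)] by blast+
  ultimately have "(a, b) \<in> ctx_of S X v" using ctx unfolding ctx_of_def by blast
  then obtain z where z: "z \<in> X" "occurs_at z (p - int m) (a @ v @ b)"
    using occurs_at_any_position[OF sub] unfolding ctx_of_def by blast
  have "factor z (p - int m) (m + length v + m) = a @ v @ b"
    using z(2) by (simp add: occurs_at_def add.assoc a_def b_def)
  also have "\<dots> = factor (splice x p (length u) v) (p - int m) (m + length v + m)"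
    by (simp add: factor_splice_window a_def b_def)
  finally show ?thesis using z(1) that by blast
qed

text \<open>Step (1): since X is closed, splices of points of X stay in X.\<close>
lemma splice_in_subshift:
  assumes "set v \<subseteq> S" "x \<in> X" "occurs_at x p u"
  shows "splice x p (length u) v \<in> X"
proof -
  let ?y = "splice x p (length u) v"
  have "\<exists>z\<in>X. \<forall>j\<in>{-int n..int n}. z j = ?y j" for n
  proof -
    obtain m where m: "{-int n..int n} \<subseteq> {p - int m..<p + int (length v) + int m}"
      using central_window_within by blast
    obtain z where "z \<in> X" "factor z (p - int m) (m + length v + m) =
        factor ?y (p - int m) (m + length v + m)"
      using splice_window_in_subshift[OF assms(2,3)] by blast
    with m show ?thesis unfolding factor_window_eq_iff by blast
  qed
  moreover have "?y \<in> topspace (fullshift_top S)"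
    using splice_in_topspace subshift_topspace[OF sub assms(2)] assms(1) by blast
  moreover have "X \<subseteq> topspace (fullshift_top S)" using subshift_topspace[OF sub] by blast
  moreover have "closedin (fullshift_top S) X" using sub unfolding subshift_def by blast
  ultimately show ?thesis using closure_of_fullshift_iff[of X S ?y] closure_of_closedin by blast
qed

text \<open>Step (2): splices of non-isolated points are non-isolated.  Points x' close to
  x still contain u at p, and their splices are distinct points close to the splice
  of x.\<close>
lemma splice_in_CB_deriv:
  assumes "set v \<subseteq> S" "x \<in> CB_deriv S X" "occurs_at x p u"
  shows "splice x p (length u) v \<in> CB_deriv S X"
proof -
  let ?y = "splice x p (length u) v"
  have x: "x \<in> X" and approx: "\<forall>n. \<exists>x'\<in>X - {x}. \<forall>j\<in>{-int n..int n}. x' j = x j"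
    using assms(2) CB_deriv_iff[OF sub] by blast+
  have "\<exists>y'\<in>X - {?y}. \<forall>j\<in>{-int n..int n}. y' j = ?y j" for n
  proof -
    obtain m where m: "{-int n..int n} \<subseteq> {p - int m..<p + int (length v) + int m}"
      using central_window_within by blast
    obtain N where N: "{p - int m..<p + int (length u) + int m} \<subseteq> {-int N..int N}"
      using window_within_central by blast
    obtain x' where x': "x' \<in> X" "x' \<noteq> x" "\<forall>j\<in>{-int N..int N}. x' j = x j"
      using approx by blast
    have close: "factor x' (p - int m) (m + length u + m) = factor x (p - int m) (m + length u + m)"
      using N x'(3) unfolding factor_window_eq_iff by blast
    then have "factor x' p (length u) = factor x p (length u)" by (simp add: factor_window)
    then have x'u: "occurs_at x' p u" using assms(3) by (simp add: occurs_at_def)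
    let ?y' = "splice x' p (length u) v"
    have "?y' \<in> X" using splice_in_subshift[OF assms(1) x'(1) x'u] .
    moreover have "?y' \<noteq> ?y"
      using splice_inj x'u assms(3) x'(2) unfolding occurs_at_def by metis
    moreover have "\<forall>j\<in>{-int n..int n}. ?y' j = ?y j"
      using factor_splice_window_eq[OF close, of v] m unfolding factor_window_eq_iff by blast
    ultimately show ?thesis by blast
  qed
  then show ?thesis using splice_in_subshift[OF assms(1) x assms(3)] CB_deriv_iff[OF sub] by blast
qed

text \<open>Hence contexts of u in X' are contexts of v in X': splice v into a point of X'
  witnessing w u w'.\<close>
lemma ctx_of_CB_deriv_mono:
  assumes "set v \<subseteq> S"
  shows "ctx_of S (CB_deriv S X) u \<subseteq> ctx_of S (CB_deriv S X) v"
proof safe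
  fix w w' assume "(w, w') \<in> ctx_of S (CB_deriv S X) u"
  then obtain x q where w: "set w \<subseteq> S" "set w' \<subseteq> S"
    and x: "x \<in> CB_deriv S X" "occurs_at x q (w @ u @ w')"
    unfolding ctx_of_def occurs_iff_occurs_at by blast
  define p where "p = q + int (length w)"
  have xw: "occurs_at x q w" and xu: "occurs_at x p u"
    and xw': "occurs_at x (p + int (length u)) w'"
    using x(2) by (simp_all add: occurs_at_append p_def add.assoc)
  let ?y = "splice x p (length u) v"
  have "occurs_at ?y q w" using xw
    by (simp add: occurs_at_def factor_splice_left p_def)
  moreover have "occurs_at ?y p v" by (simp add: occurs_at_def factor_splice_middle)
  moreover have "occurs_at ?y (p + int (length v)) w'" using xw'
    by (simp add: occurs_at_def factor_splice_right)
  ultimately have "occurs_at ?y q (w @ v @ w')"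
    by (simp add: occurs_at_append p_def add.assoc)
  moreover have "?y \<in> CB_deriv S X" using splice_in_CB_deriv[OF assms x(1) xu] .
  ultimately show "(w, w') \<in> ctx_of S (CB_deriv S X) v"
    using w unfolding ctx_of_def occurs_iff_occurs_at by blast
qed

end

theorem lemma3:
  fixes S :: "'s set" and X :: "(int \<Rightarrow> 's) set" and u v :: "'s list"
  assumes "finite S"
    and "subshift S X"
    and "set u \<subseteq> S" and "set v \<subseteq> S"
    and "ctx_of S X u = ctx_of S X v"
  shows "ctx_of S (CB_deriv S X) u = ctx_of S (CB_deriv S X) v"
proof
  show "ctx_of S (CB_deriv S X) u \<subseteq> ctx_of S (CB_deriv S X) v"
    using ctx_of_CB_deriv_mono[OF assms(2)] assms(4,5) by blast
  show "ctx_of S (CB_deriv S X) v \<subseteq> ctx_of S (CB_deriv S X) u"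
    using ctx_of_CB_deriv_mono[OF assms(2)] assms(3,5) by blast
qed

end
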